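(* Fix $k\ge2$ and let $Z^{(1)},\dots,Z^{(k)}$ be independent copies of $Z$. In the $k$-choice model: (1) if $\mathbb{E}\min_{1\le i\le k}Z^{(i)}<\infty$, then $\sup_{n\in\mathbb{N}}|R_n|<\infty$ almost surely; (2) if $\mathbb{E}\min_{1\le i\le k}Z^{(i)}=\infty$, then $\sup_{n\in\mathbb{N}}|R_n|=\infty$ almost surely.
   Context: Let $Z$ be a random variable on $\mathbb{N}=\{1,2,3,\dots\}$. Fix $k\ge2$ and let $(Z^{(1)}_n)_{n\ge1},\dots,(Z^{(k)}_n)_{n\ge1}$ be $k$ independent sequences of i.i.d. random variables, all distributed as $Z$ and mutually independent. The $k$-choice model: define $T_n=\{n\}$ for $n\le0$ and $T_n=\{n\}\cup\bigcup_{i=1}^k T_{n-Z^{(i)}_n}$ for $n\ge1$. Let $\mathcal{L}_n=T_n\cap\{0,-1,-2,\dots\}$ and $R_n=\max\mathcal{L}_n$. *)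

theory Defs
  imports "HOL-Probability.Probability"
begin

text \<open>Given realised values z i n (the value of Z^(i)_n,
 with choices indexed by i < k and times n \<ge> 1), T_n is the least set with
 n \<in> T_n and, for n \<ge> 1, T_{n - z i n} \<subseteq> T_n for all i < k.\<close>

inductive inT :: "nat \<Rightarrow> (nat \<Rightarrow> nat \<Rightarrow> nat) \<Rightarrow> int \<Rightarrow> int \<Rightarrow> bool"
  for k :: nat and z :: "nat \<Rightarrow> nat \<Rightarrow> nat" where
  self: "inT k z n n"
| step: "1 \<le> n \<Longrightarrow> i < k \<Longrightarrow> inT k z (n - int (z i (nat n))) x \<Longrightarrow> inT k z n x"

definition Tset :: "nat \<Rightarrow> (nat \<Rightarrow> nat \<Rightarrow> nat) \<Rightarrow> int \<Rightarrow> int set" where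
  "Tset k z n = {x. inT k z n x}"

definition Lset :: "nat \<Rightarrow> (nat \<Rightarrow> nat \<Rightarrow> nat) \<Rightarrow> int \<Rightarrow> int set" where
  "Lset k z n = Tset k z n \<inter> {..0}"

definition Rval :: "nat \<Rightarrow> (nat \<Rightarrow> nat \<Rightarrow> nat) \<Rightarrow> int \<Rightarrow> int" where
  "Rval k z n = Max (Lset k z n)"

end

theory Submission
  imports Defs
begin

text \<open>If from every time m \<ge> 1 some choice jumps back by at most m + B, following such
  jumps the walk first crosses 0 inside [-B, 0], so |R_n| \<le> B. If instead all k choices at
  time n jump back further than n + b, then, as T_m = {m} for m \<le> 0, the landing points
  n - Z^(i)_n are all of L_n and |R_n| > b. The latter event has probability
  P(min_i Z^(i) > n + b), independently over n, and \<Sum>_t P(min_i Z^(i) > t) = E min_i Z^(i).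
  So the first Borel-Cantelli lemma gives (1), the second one gives (2).\<close>

lemma inT_ge_min:
  assumes "inT k z n x" "n \<le> N"
    and "\<And>i m. i < k \<Longrightarrow> 1 \<le> m \<Longrightarrow> int m \<le> N \<Longrightarrow> z i m \<le> C"
  shows "min n (- int C) \<le> x"
  using assms
proof (induction rule: inT.induct)
  case (step n i x)
  have "z i (nat n) \<le> C" using step by (intro step.prems(2)) auto
  with step show ?case by fastforce
qed simp

lemma inT_nonpos_eq: "inT k z m x \<Longrightarrow> m \<le> 0 \<Longrightarrow> x = m"
  by (induction rule: inT.induct) auto

lemma finite_Lset: "finite (Lset k z n)"
proof -
  define C where "C = Max ((\<lambda>(i, m). z i m) ` ({..<k} \<times> {1..nat n}))"
  have "\<And>i m. i < k \<Longrightarrow> 1 \<le> m \<Longrightarrow> int m \<le> n \<Longrightarrow> z i m \<le> C"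
    unfolding C_def by (rule Max_ge) force+
  then have "Lset k z n \<subseteq> {min n (- int C)..0}"
    unfolding Lset_def Tset_def using inT_ge_min[of k z n _ n C] by auto
  then show ?thesis
    using finite_subset by blast
qed

lemma Rval_in_Lset: "x \<in> Lset k z n \<Longrightarrow> Rval k z n \<in> Lset k z n"
  unfolding Rval_def using finite_Lset by (intro Max_in) auto

lemma Rval_ge: "x \<in> Lset k z n \<Longrightarrow> x \<le> Rval k z n"
  unfolding Rval_def using finite_Lset by (rule Max_ge)

lemma Rval_nonpos: "x \<in> Lset k z n \<Longrightarrow> Rval k z n \<le> 0"
  using Rval_in_Lset by (auto simp: Lset_def)

lemma inT_jump: "1 \<le> n \<Longrightarrow> i < k \<Longrightarrow> inT k z (int n - int (z i n)) x \<Longrightarrow> inT k z (int n) x"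
  using inT.step[of "int n" i k z x] by simp

lemma inT_reaches_window:
  assumes "\<And>m. 1 \<le> m \<Longrightarrow> \<exists>i<k. 1 \<le> z i m \<and> z i m \<le> m + B" and "1 \<le> n"
  shows "\<exists>x. inT k z (int n) x \<and> - int B \<le> x \<and> x \<le> 0"
  using assms(2)
proof (induction n rule: less_induct)
  case (less n)
  obtain i where i: "i < k" "1 \<le> z i n" "z i n \<le> n + B"
    using assms(1) less.prems by blast
  show ?case
  proof (cases "n \<le> z i n")
    case True
    then show ?thesis
      using inT_jump[OF less.prems i(1) inT.self] i by force
  next
    case False
    with i have "n - z i n < n" "1 \<le> n - z i n"
      by auto
    then obtain x where "inT k z (int (n - z i n)) x" "- int B \<le> x" "x \<le> 0"
      using less.IH by blast
    then show ?thesis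
      using inT_jump[OF less.prems i(1)] False by (auto simp: of_nat_diff)
  qed
qed

lemma abs_Rval_le:
  assumes "\<And>m. 1 \<le> m \<Longrightarrow> \<exists>i<k. 1 \<le> z i m \<and> z i m \<le> m + B" and "1 \<le> n"
  shows "\<bar>Rval k z (int n)\<bar> \<le> int B"
proof -
  obtain x where x: "inT k z (int n) x" "- int B \<le> x" "x \<le> 0"
    using inT_reaches_window[OF assms] by blast
  then have "x \<in> Lset k z (int n)"
    by (simp add: Lset_def Tset_def)
  with x show ?thesis
    using Rval_ge Rval_nonpos by fastforce
qed

lemma abs_Rval_gt:
  assumes "1 \<le> k" "1 \<le> n" "\<And>i. i < k \<Longrightarrow> n + b < z i n"
  shows "int b < \<bar>Rval k z (int n)\<bar>"
proof -
  have landing: "\<exists>i<k. x = int n - int (z i n)" if "x \<in> Lset k z (int n)" for x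
  proof -
    from that have x: "inT k z (int n) x" "x \<le> 0"
      by (auto simp: Lset_def Tset_def)
    with assms(2) obtain i where "i < k" "inT k z (int n - int (z i n)) x"
      by (auto elim: inT.cases)
    with assms(3)[of i] show ?thesis
      using inT_nonpos_eq by fastforce
  qed
  have "int n - int (z 0 n) \<in> Lset k z (int n)"
    using inT_jump[OF assms(2) _ inT.self, of 0 k z] assms(1) assms(3)[of 0]
    by (simp add: Lset_def Tset_def)
  then obtain i where "i < k" "Rval k z (int n) = int n - int (z i n)"
    using landing Rval_in_Lset by blast
  with assms(3)[of i] show ?thesis
    by simp
qed

lemma nn_integral_of_nat_eq_suminf_tail:
  fixes Y :: "'a \<Rightarrow> nat"
  assumes "\<And>t. {\<omega>\<in>space M. t < Y \<omega>} \<in> sets M"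
  shows "(\<integral>\<^sup>+ \<omega>. of_nat (Y \<omega>) \<partial>M) = (\<Sum>t. emeasure M {\<omega>\<in>space M. t < Y \<omega>})"
proof -
  have "(\<integral>\<^sup>+ \<omega>. of_nat (Y \<omega>) \<partial>M) = (\<integral>\<^sup>+ \<omega>. (\<Sum>t. indicator {\<omega>\<in>space M. t < Y \<omega>} \<omega>) \<partial>M)"
  proof (rule nn_integral_cong)
    fix \<omega> assume "\<omega> \<in> space M"
    then have "(\<Sum>t. indicator {\<omega>\<in>space M. t < Y \<omega>} \<omega>) = (\<Sum>t. of_bool (t < Y \<omega>) :: ennreal)"
      by (simp add: indicator_def)
    also have "\<dots> = (\<Sum>t<Y \<omega>. 1)"
      by (subst suminf_finite[of "{..<Y \<omega>}"]) auto
    finally show "of_nat (Y \<omega>) = (\<Sum>t. indicator {\<omega>\<in>space M. t < Y \<omega>} \<omega> :: ennreal)"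
      by simp
  qed
  also have "\<dots> = (\<Sum>t. emeasure M {\<omega>\<in>space M. t < Y \<omega>})"
    using assms by (simp add: nn_integral_suminf)
  finally show ?thesis .
qed

lemma prod_one_minus_le_exp_sum:
  fixes x :: "'i \<Rightarrow> real"
  assumes "finite J" "\<And>j. j \<in> J \<Longrightarrow> 0 \<le> x j" "\<And>j. j \<in> J \<Longrightarrow> x j \<le> 1"
  shows "(\<Prod>j\<in>J. 1 - x j) \<le> exp (- (\<Sum>j\<in>J. x j))"
proof -
  have "(\<Prod>j\<in>J. 1 - x j) \<le> (\<Prod>j\<in>J. exp (- x j))"
    using assms exp_minus_ge by (intro prod_mono) auto
  also have "\<dots> = exp (\<Sum>j\<in>J. - x j)"
    using assms(1) by (simp add: exp_sum)
  finally show ?thesis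
    by (simp add: sum_negf)
qed

lemma (in prob_space) indep_events_compl:
  assumes "indep_events A I"
  shows "indep_events (\<lambda>i. space M - A i) I"
proof -
  have "indep_sets (\<lambda>i. sigma_sets (space M) {A i}) I"
    using assms unfolding indep_events_def_alt
    by (rule indep_sets_sigma) (simp add: Int_stable_def)
  then show ?thesis
    unfolding indep_events_def_alt
    by (rule indep_sets_mono_sets) (auto intro: sigma_sets.Compl sigma_sets.Basic)
qed

lemma (in prob_space) borel_cantelli_AE2_exists:
  assumes indep: "indep_events A {N..}" and diverges: "\<not> summable (\<lambda>n. prob (A n))"
  shows "AE \<omega> in M. \<exists>n\<ge>N. \<omega> \<in> A n"
proof -
  define C where "C = (\<Inter>n\<in>{N..}. space M - A n)"
  have A: "A n \<in> events" if "N \<le> n" for n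
    using indep that by (auto simp: indep_events_def)
  then have C: "C \<in> events"
    unfolding C_def by (intro sets.countable_INT') auto
  define S where "S m = (\<Sum>j<m. prob (A (j + N)))" for m
  have prob_C_le: "prob C \<le> exp (- S m)" for m
  proof (cases "m = 0")
    case True
    then show ?thesis
      by (simp add: S_def)
  next
    case False
    define J where "J = (\<lambda>j. j + N) ` {..<m}"
    have J: "J \<subseteq> {N..}" "finite J" "J \<noteq> {}"
      using False by (auto simp: J_def)
    have "(\<Inter>n\<in>J. space M - A n) \<in> events"
      using J A by (intro sets.finite_INT) auto
    then have "prob C \<le> prob (\<Inter>n\<in>J. space M - A n)"
      using J by (intro finite_measure_mono) (auto simp: C_def)
    also have "\<dots> = (\<Prod>n\<in>J. prob (space M - A n))"
      using indep_events_compl[OF indep] J by (auto simp: indep_events_def)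
    also have "\<dots> = (\<Prod>n\<in>J. 1 - prob (A n))"
      using J A by (intro prod.cong refl prob_compl) auto
    also have "\<dots> \<le> exp (- (\<Sum>n\<in>J. prob (A n)))"
      using J by (intro prod_one_minus_le_exp_sum) auto
    also have "\<dots> = exp (- S m)"
      by (simp add: J_def S_def sum.reindex)
    finally show ?thesis .
  qed
  have S_unbounded: "\<exists>m. y < S m" for y
  proof (rule ccontr)
    assume "\<nexists>m. y < S m"
    then have "summable (\<lambda>j. prob (A (j + N)))"
      by (intro summableI_nonneg_bounded[of _ y]) (auto simp: S_def not_less)
    with diverges show False
      using summable_iff_shift[of "\<lambda>n. prob (A n)" N] by simp
  qed
  have "prob C = 0"
  proof (rule ccontr)
    assume "prob C \<noteq> 0"
    then have pos: "0 < prob C"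
      using measure_nonneg[of M C] by linarith
    obtain m where "- ln (prob C) < S m"
      using S_unbounded by blast
    then have "exp (- S m) < prob C"
      using pos by (metis exp_less_cancel_iff exp_ln minus_less_iff)
    with prob_C_le[of m] show False
      by simp
  qed
  moreover have "{\<omega>\<in>space M. \<not> (\<exists>n\<ge>N. \<omega> \<in> A n)} = C"
    by (auto simp: C_def)
  ultimately show ?thesis
    using AE_iff_measurable[OF C] by (simp add: emeasure_eq_measure)
qed

lemma (in prob_space) indep_events_time_slices:
  fixes X :: "'i \<Rightarrow> 't \<Rightarrow> 'a \<Rightarrow> 'b"
  assumes indep: "indep_vars (\<lambda>_. count_space UNIV) (\<lambda>(i, n). X i n) (K \<times> I)"
    and "finite K"
  shows "indep_events (\<lambda>n. {\<omega>\<in>space M. \<forall>i\<in>K. P n i (X i n \<omega>)}) I"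
proof -
  let ?slice = "\<lambda>n. PiM (K \<times> {n}) (\<lambda>_. count_space UNIV :: 'b measure)"
  have "indep_vars ?slice (\<lambda>n \<omega>. restrict (\<lambda>j. (\<lambda>(i, n). X i n) j \<omega>) (K \<times> {n})) I"
    using indep by (rule indep_vars_restrict) (auto simp: disjoint_family_on_def)
  then have "indep_events (\<lambda>n. {\<omega>\<in>space M. \<forall>i\<in>K. P n i
      (restrict (\<lambda>j. (\<lambda>(i, n). X i n) j \<omega>) (K \<times> {n}) (i, n))}) I"
  proof (rule indep_eventsI_indep_vars)
    fix n
    have "Measurable.pred (?slice n) (\<lambda>f. P n i (f (i, n)))" if "i \<in> K" for i
      using that by (intro measurable_compose[OF measurable_component_singleton]) auto
    then have "Measurable.pred (?slice n) (\<lambda>f. \<forall>i\<in>K. P n i (f (i, n)))"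
      using \<open>finite K\<close> by (intro pred_intros_finite)
    then show "{f \<in> space (?slice n). \<forall>i\<in>K. P n i (f (i, n))} \<in> sets (?slice n)"
      by (simp add: pred_def)
  qed
  then show ?thesis
    by simp
qed

locale k_choice_model = prob_space M for M :: "'a measure" +
  fixes p :: "nat pmf" and k :: nat and X :: "nat \<Rightarrow> nat \<Rightarrow> 'a \<Rightarrow> nat"
  assumes k_pos: "0 < k"
    and p_pos: "0 \<notin> set_pmf p"
    and X_measurable: "\<And>i n. i < k \<Longrightarrow> 1 \<le> n \<Longrightarrow> X i n \<in> measurable M (count_space UNIV)"
    and X_distr: "\<And>i n. i < k \<Longrightarrow> 1 \<le> n \<Longrightarrow> distr M (count_space UNIV) (X i n) = measure_pmf p"
    and X_indep: "indep_vars (\<lambda>_. count_space UNIV) (\<lambda>(i, n). X i n) ({..<k} \<times> {1..})"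
begin

text \<open>By independence of the choices, this is P(min_i Z^(i) > t).\<close>

definition min_tail :: "nat \<Rightarrow> real" where
  "min_tail t = measure p {t<..} ^ k"

lemma min_tail_nonneg: "0 \<le> min_tail t"
  by (simp add: min_tail_def)

lemma prob_X: "i < k \<Longrightarrow> 1 \<le> n \<Longrightarrow> prob (X i n -` A \<inter> space M) = measure p A"
  using measure_distr[OF X_measurable, of i n A] X_distr[of i n] by simp

lemma events_all_choices: "1 \<le> n \<Longrightarrow> {\<omega>\<in>space M. \<forall>i<k. P i (X i n \<omega>)} \<in> events"
proof -
  assume "1 \<le> n"
  then have "Measurable.pred M (\<lambda>\<omega>. \<forall>i\<in>{..<k}. P i (X i n \<omega>))"
    by (intro pred_intros_finite(3)[OF finite_lessThan] measurable_compose[OF X_measurable]) auto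
  then show ?thesis
    unfolding pred_def by (simp only: lessThan_iff Ball_def)
qed

lemma prob_all_choices_gt:
  assumes "1 \<le> n"
  shows "prob {\<omega>\<in>space M. \<forall>i<k. t < X i n \<omega>} = min_tail t"
proof -
  let ?J = "{..<k} \<times> {n}"
  have "{\<omega>\<in>space M. \<forall>i<k. t < X i n \<omega>} = (\<Inter>j\<in>?J. (\<lambda>(i, n). X i n) j -` {t<..} \<inter> space M)"
    using k_pos by auto
  also have "prob \<dots> = (\<Prod>j\<in>?J. prob ((\<lambda>(i, n). X i n) j -` {t<..} \<inter> space M))"
    using assms k_pos by (intro indep_varsD[OF X_indep]) auto
  also have "\<dots> = (\<Prod>j\<in>?J. measure p {t<..})"
    using assms prob_X by (intro prod.cong) auto
  finally show ?thesis
    by (simp add: min_tail_def)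
qed

lemma nn_integral_min_eq_suminf:
  "(\<integral>\<^sup>+ \<omega>. of_nat (Min ((\<lambda>i. X i 1 \<omega>) ` {..<k})) \<partial>M) = (\<Sum>t. ennreal (min_tail t))"
proof -
  have min_gt: "{\<omega>\<in>space M. t < Min ((\<lambda>i. X i 1 \<omega>) ` {..<k})} = {\<omega>\<in>space M. \<forall>i<k. t < X i 1 \<omega>}"
    for t
    using k_pos by (subst Min_gr_iff) auto
  have "(\<integral>\<^sup>+ \<omega>. of_nat (Min ((\<lambda>i. X i 1 \<omega>) ` {..<k})) \<partial>M)
      = (\<Sum>t. emeasure M {\<omega>\<in>space M. t < Min ((\<lambda>i. X i 1 \<omega>) ` {..<k})})"
    by (rule nn_integral_of_nat_eq_suminf_tail) (unfold min_gt, rule events_all_choices, simp)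
  also have "\<dots> = (\<Sum>t. ennreal (min_tail t))"
    unfolding min_gt by (simp add: emeasure_eq_measure prob_all_choices_gt)
  finally show ?thesis .
qed

lemma AE_choices_pos: "AE \<omega> in M. \<forall>i m. i < k \<longrightarrow> 1 \<le> m \<longrightarrow> 1 \<le> X i m \<omega>"
proof -
  have "AE \<omega> in M. 1 \<le> X i m \<omega>" if "i < k" "1 \<le> m" for i m
  proof -
    have zero: "X i m -` {0} \<inter> space M \<in> events"
      using X_measurable[OF that] by (rule measurable_sets) simp
    have "prob (X i m -` {0} \<inter> space M) = 0"
      using prob_X[OF that, of "{0}"] p_pos by (simp add: measure_pmf_single set_pmf_iff)
    then have "AE \<omega> in M. \<omega> \<notin> X i m -` {0} \<inter> space M"
      using prob_eq_0[OF zero] by simp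
    with AE_space show ?thesis
      by eventually_elim auto
  qed
  then have "AE \<omega> in M. i < k \<longrightarrow> 1 \<le> m \<longrightarrow> 1 \<le> X i m \<omega>" for i m
    by (cases "i < k \<and> 1 \<le> m") auto
  then show ?thesis
    by (simp add: AE_all_countable)
qed

lemma AE_Rval_bounded:
  assumes "summable min_tail"
  shows "AE \<omega> in M. \<exists>B::int. \<forall>n::nat. 1 \<le> n \<longrightarrow> \<bar>Rval k (\<lambda>i m. X i m \<omega>) (int n)\<bar> \<le> B"
proof -
  define A where "A n = {\<omega>\<in>space M. \<forall>i<k. Suc n < X i (Suc n) \<omega>}" for n
  have A: "A n \<in> events" for n
    unfolding A_def by (rule events_all_choices) simp
  have "summable (\<lambda>n. prob (A n))"
    using assms by (simp add: A_def prob_all_choices_gt summable_Suc_iff)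
  with A have "AE \<omega> in M. eventually (\<lambda>n. \<omega> \<in> space M - A n) sequentially"
    by (intro borel_cantelli_AE1) (auto simp: emeasure_eq_measure)
  then show ?thesis
    using AE_choices_pos
  proof eventually_elim
    case (elim \<omega>)
    then obtain N where N: "\<And>n. N \<le> n \<Longrightarrow> \<omega> \<in> space M - A n"
      by (auto simp: eventually_sequentially)
    define B where "B = (\<Sum>m\<le>Suc N. X 0 m \<omega>)"
    have jump: "\<exists>i<k. 1 \<le> X i m \<omega> \<and> X i m \<omega> \<le> m + B" if "1 \<le> m" for m
    proof (cases "m \<le> Suc N")
      case True
      then have "X 0 m \<omega> \<le> B"
        unfolding B_def by (intro member_le_sum) auto
      with that elim(2) k_pos show ?thesis
        by auto
    next
      case False
      then have "\<omega> \<in> space M - A (m - 1)" and "Suc (m - 1) = m"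
        using N by auto
      then obtain i where "i < k" "X i m \<omega> \<le> m"
        unfolding A_def by (auto simp: not_less)
      with that elim(2) show ?thesis
        by auto
    qed
    show ?case
      by (intro exI[of _ "int B"] allI impI abs_Rval_le[OF jump])
  qed
qed

lemma AE_Rval_unbounded:
  assumes "\<not> summable min_tail"
  shows "AE \<omega> in M. \<forall>B::int. \<exists>n::nat. 1 \<le> n \<and> B < \<bar>Rval k (\<lambda>i m. X i m \<omega>) (int n)\<bar>"
proof -
  define A where "A b n = {\<omega>\<in>space M. \<forall>i<k. n + b < X i n \<omega>}" for b n
  have "AE \<omega> in M. \<exists>n\<ge>1. \<omega> \<in> A b n" for b
  proof (rule borel_cantelli_AE2_exists)
    show "indep_events (A b) {1..}"
      using indep_events_time_slices[OF X_indep, of "\<lambda>n i x. n + b < x"]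
      by (simp add: A_def[abs_def] Ball_def)
    show "\<not> summable (\<lambda>n. prob (A b n))"
    proof
      assume "summable (\<lambda>n. prob (A b n))"
      then have "summable (\<lambda>n. prob (A b (Suc n)))"
        by (rule summable_ignore_initial_segment[where k = 1, simplified])
      moreover have "prob (A b (Suc n)) = min_tail (n + Suc b)" for n
        unfolding A_def by (subst prob_all_choices_gt) simp_all
      ultimately have "summable (\<lambda>n. min_tail (n + Suc b))"
        by simp
      with assms show False
        by (simp only: summable_iff_shift)
    qed
  qed
  then have "AE \<omega> in M. \<forall>b. \<exists>n\<ge>1. \<omega> \<in> A b n"
    by (simp add: AE_all_countable)
  then show ?thesis
  proof eventually_elim
    case (elim \<omega>)
    show ?case
    proof
      fix B :: int
      obtain n where n: "1 \<le> n" "\<forall>i<k. n + nat B < X i n \<omega>"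
        using elim by (auto simp: A_def)
      then have "int (nat B) < \<bar>Rval k (\<lambda>i m. X i m \<omega>) (int n)\<bar>"
        using k_pos by (intro abs_Rval_gt) auto
      moreover have "B \<le> int (nat B)"
        by simp
      ultimately show "\<exists>n. 1 \<le> n \<and> B < \<bar>Rval k (\<lambda>i m. X i m \<omega>) (int n)\<bar>"
        using n(1) by (intro exI[of _ n]) auto
    qed
  qed
qed

end

theorem mainTheorem16:
  fixes M :: "'a measure" and p :: "nat pmf" and k :: nat
    and X :: "nat \<Rightarrow> nat \<Rightarrow> 'a \<Rightarrow> nat"
  assumes "prob_space M"
    and "k \<ge> 2"
    and "0 \<notin> set_pmf p"
    and "\<And>i n. i < k \<Longrightarrow> 1 \<le> n \<Longrightarrow> X i n \<in> measurable M (count_space UNIV)"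
    and "\<And>i n. i < k \<Longrightarrow> 1 \<le> n \<Longrightarrow> distr M (count_space UNIV) (X i n) = measure_pmf p"
    and "prob_space.indep_vars M (\<lambda>_. count_space UNIV) (\<lambda>(i, n). X i n) ({..<k} \<times> {1..})"
  shows "((\<integral>\<^sup>+ \<omega>. of_nat (Min ((\<lambda>i. X i 1 \<omega>) ` {..<k})) \<partial>M) < \<infinity> \<longrightarrow>
            (AE \<omega> in M. \<exists>B::int. \<forall>n::nat. 1 \<le> n \<longrightarrow>
                \<bar>Rval k (\<lambda>i m. X i m \<omega>) (int n)\<bar> \<le> B))
       \<and> ((\<integral>\<^sup>+ \<omega>. of_nat (Min ((\<lambda>i. X i 1 \<omega>) ` {..<k})) \<partial>M) = \<infinity> \<longrightarrow>
            (AE \<omega> in M. \<forall>B::int. \<exists>n::nat. 1 \<le> n \<and>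
                \<bar>Rval k (\<lambda>i m. X i m \<omega>) (int n)\<bar> > B))"
proof -
  interpret k_choice_model M p k X
    using assms by (intro k_choice_model.intro k_choice_model_axioms.intro) simp_all
  have "(\<Sum>t. ennreal (min_tail t)) \<noteq> \<top> \<longleftrightarrow> summable min_tail"
    using summable_suminf_not_top ennreal_suminf_neq_top min_tail_nonneg by metis
  then show ?thesis
    unfolding nn_integral_min_eq_suminf
    using AE_Rval_bounded AE_Rval_unbounded by (auto simp: less_top[symmetric])
qed

end
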